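(* Let $k$ be a job such that there is exactly one job $j$ for which $(j,k)$ is a red pair. Then, in the schedule produced by $1$-SORT, \[ \frac{\sigma_k+D(j,k)}{\sigma_k+D^*(j,k)}\le\frac{\nu+\nu^2+2+\frac{2}{\mu}}{\nu+\nu^2+1+\frac{1}{\mu}}. \]
   Context: Setting: single machine, jobs $J=\{1,\dots,n\}$, each job $j$ with test time $t_j\ge0$ and processing time $p_j\ge0$ (revealed only when the test is executed); each job's test must be executed before its processing part, which may start any time after the test; operations are non-preemptive and the machine does one at a time. $\sigma_j=t_j+p_j$, $m_j=\max\{t_j,p_j\}$. Standing assumption (general position): no two of the $3n$ numbers $t_j,p_j,\sigma_j$ are equal, and $\sigma_k>0$. Algorithm $1$-SORT: keep a priority queue of available operations, initially the test of every job $j$ with priority $t_j$; repeatedly remove a minimum-priority operation and execute it immediately; after executing the test of $j$, insert the processing part of $j$ with priority $p_j$. For distinct jobs $j,k$, let $d_{k,j}$ be the total amount of time during which operations of $k$ are executed before the completion time of $j$, and $D(j,k)=d_{j,k}+d_{k,j}$, evaluated for the $1$-SORT schedule; $D^*(j,k)=\min\{\sigma_j,\sigma_k\}$. Fix constants $\mu>1$ and $0<\nu<1$ with $\mu\nu>1$ and $1+\frac1\mu\le\nu+\nu^2$. A job $j$ is imbalanced if $m_j\ge\mu\min\{t_j,p_j\}$. For distinct jobs $j,k$, the ordered pair $(j,k)$ is a red pair if $j$ is imbalanced, $m_j\ge t_k\ge\nu m_j$, and $p_k\ge\nu t_k$. *)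

theory Defs
  imports Main "HOL.Real"
begin

datatype 'a operation = Test 'a | Proc 'a

fun op_job :: "'a operation \<Rightarrow> 'a" where
  "op_job (Test j) = j"
| "op_job (Proc j) = j"

text \<open>Length of an operation; also its priority in 1-SORT.\<close>
fun op_len :: "('a \<Rightarrow> real) \<Rightarrow> ('a \<Rightarrow> real) \<Rightarrow> 'a operation \<Rightarrow> real" where
  "op_len t p (Test j) = t j"
| "op_len t p (Proc j) = p j"

definition available :: "'a set \<Rightarrow> 'a operation list \<Rightarrow> 'a operation set" where
  "available J xs =
     {Test j | j. j \<in> J \<and> Test j \<notin> set xs}
   \<union> {Proc j | j. j \<in> J \<and> Test j \<in> set xs \<and> Proc j \<notin> set xs}"

text \<open>Operations are executed back to back starting at time 0.\<close>
definition one_sort_order ::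
  "'a set \<Rightarrow> ('a \<Rightarrow> real) \<Rightarrow> ('a \<Rightarrow> real) \<Rightarrow> 'a operation list \<Rightarrow> bool" where
  "one_sort_order J t p ops \<longleftrightarrow>
     length ops = 2 * card J \<and>
     (\<forall>i < length ops. ops ! i \<in> available J (take i ops) \<and>
        (\<forall>q \<in> available J (take i ops). op_len t p (ops ! i) \<le> op_len t p q))"

text \<open>d k j: total time during which operations of k are executed before the completion
  time of j (the completion of j's processing part).\<close>
definition dd :: "('a \<Rightarrow> real) \<Rightarrow> ('a \<Rightarrow> real) \<Rightarrow> 'a operation list \<Rightarrow> 'a \<Rightarrow> 'a \<Rightarrow> real" where
  "dd t p ops k j =
     sum_list (map (op_len t p) (filter (\<lambda>q. op_job q = k) (takeWhile (\<lambda>q. q \<noteq> Proc j) ops)))"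

definition DD :: "('a \<Rightarrow> real) \<Rightarrow> ('a \<Rightarrow> real) \<Rightarrow> 'a operation list \<Rightarrow> 'a \<Rightarrow> 'a \<Rightarrow> real" where
  "DD t p ops j k = dd t p ops j k + dd t p ops k j"

definition DDstar :: "('a \<Rightarrow> real) \<Rightarrow> ('a \<Rightarrow> real) \<Rightarrow> 'a \<Rightarrow> 'a \<Rightarrow> real" where
  "DDstar t p j k = min (t j + p j) (t k + p k)"

definition imbalanced :: "real \<Rightarrow> ('a \<Rightarrow> real) \<Rightarrow> ('a \<Rightarrow> real) \<Rightarrow> 'a \<Rightarrow> bool" where
  "imbalanced \<mu> t p j \<longleftrightarrow> max (t j) (p j) \<ge> \<mu> * min (t j) (p j)"

definition red_pair :: "real \<Rightarrow> real \<Rightarrow> ('a \<Rightarrow> real) \<Rightarrow> ('a \<Rightarrow> real) \<Rightarrow> 'a \<Rightarrow> 'a \<Rightarrow> bool" where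
  "red_pair \<mu> \<nu> t p j k \<longleftrightarrow> j \<noteq> k \<and> imbalanced \<mu> t p j \<and>
     max (t j) (p j) \<ge> t k \<and> t k \<ge> \<nu> * max (t j) (p j) \<and> p k \<ge> \<nu> * t k"

definition general_position :: "'a set \<Rightarrow> ('a \<Rightarrow> real) \<Rightarrow> ('a \<Rightarrow> real) \<Rightarrow> bool" where
  "general_position J t p \<longleftrightarrow>
     (\<forall>j\<in>J. \<forall>k\<in>J.
        (t j = t k \<longrightarrow> j = k) \<and> (p j = p k \<longrightarrow> j = k) \<and>
        (t j + p j = t k + p k \<longrightarrow> j = k) \<and>
        t j \<noteq> p k \<and> t j \<noteq> t k + p k \<and> p j \<noteq> t k + p k)"

end

theory Submission
  imports Defs
begin

text \<open>1-SORT never runs an operation longer than max(t_k, p_k) before k completes, since an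
  operation of k is available all along. Let m and a be the larger and the smaller part of the
  imbalanced job j. If p_k < m, then j cannot complete before k, so d_{j,k} \<le> a and
  D(j,k) \<le> \<sigma>_k + a; if p_k > m, the processing part of k is not run before j completes, so
  d_{k,j} \<le> t_k and D(j,k) \<le> \<sigma>_j + t_k. In both cases the red-pair inequalities
  t_k \<ge> \<nu> m, p_k \<ge> \<nu> t_k, a \<le> m/\<mu> and \<nu> + \<nu>^2 \<ge> 1 + 1/\<mu> bound the ratio.\<close>

definition ops_before_completion :: "'a operation list \<Rightarrow> 'a \<Rightarrow> 'a operation set" where
  "ops_before_completion ops j = set (takeWhile (\<lambda>q. q \<noteq> Proc j) ops)"

lemma in_set_takeWhileE:
  assumes "y \<in> set (takeWhile P xs)"
  obtains i where "i < length xs" "xs ! i = y" "set (take i xs) \<subseteq> set (takeWhile P xs)"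
proof -
  define n where "n = length (takeWhile P xs)"
  have tw: "takeWhile P xs = take n xs"
    unfolding n_def by (rule takeWhile_eq_take)
  then obtain i where "i < n" "i < length xs" "xs ! i = y"
    using assms by (auto simp: in_set_conv_nth)
  moreover have "set (take i xs) \<subseteq> set (take n xs)"
    using \<open>i < n\<close> by (intro set_take_subset_set_take) simp
  ultimately show ?thesis using that tw by simp
qed

lemma one_sort_order_nth_available:
  assumes "one_sort_order J t p ops" "i < length ops"
  shows "ops ! i \<in> available J (take i ops)"
  using assms unfolding one_sort_order_def by auto

lemma one_sort_order_nth_min:
  assumes "one_sort_order J t p ops" "i < length ops" "q \<in> available J (take i ops)"
  shows "op_len t p (ops ! i) \<le> op_len t p q"
  using assms unfolding one_sort_order_def by auto

lemma one_sort_order_distinct: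
  assumes "one_sort_order J t p ops"
  shows "distinct ops"
  unfolding distinct_conv_nth
proof (intro allI impI)
  have fresh: "ops ! i \<notin> set (take i ops)" if "i < length ops" for i
    using one_sort_order_nth_available[OF assms that] unfolding available_def by auto
  have earlier: "ops ! i \<in> set (take i' ops)" if "i < i'" "i' < length ops" for i i'
    using that by (auto simp: in_set_conv_nth intro!: exI[of _ i])
  fix i i' assume "i < length ops" "i' < length ops" "i \<noteq> i'"
  then show "ops ! i \<noteq> ops ! i'"
    using fresh earlier by (metis linorder_neqE_nat)
qed

lemma one_sort_order_op_len_before_completion:
  assumes "one_sort_order J t p ops" "k \<in> J" "y \<in> ops_before_completion ops k"
  shows "op_len t p y \<le> max (t k) (p k)"
proof -
  obtain i where i: "i < length ops" "ops ! i = y"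
    "set (take i ops) \<subseteq> ops_before_completion ops k"
    using assms(3) unfolding ops_before_completion_def by (rule in_set_takeWhileE)
  have "Proc k \<notin> set (take i ops)"
    using i(3) set_takeWhileD unfolding ops_before_completion_def by fastforce
  then have "(if Test k \<in> set (take i ops) then Proc k else Test k) \<in> available J (take i ops)"
    using assms(2) unfolding available_def by auto
  from one_sort_order_nth_min[OF assms(1) i(1) this] i(2) show ?thesis
    by (auto split: if_splits)
qed

lemma one_sort_order_test_before_proc:
  assumes "one_sort_order J t p ops" "Proc x \<in> ops_before_completion ops k"
  shows "Test x \<in> ops_before_completion ops k"
proof -
  obtain i where i: "i < length ops" "ops ! i = Proc x"
    "set (take i ops) \<subseteq> ops_before_completion ops k"
    using assms(2) unfolding ops_before_completion_def by (rule in_set_takeWhileE)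
  have "Test x \<in> set (take i ops)"
    using one_sort_order_nth_available[OF assms(1) i(1)] i(2) unfolding available_def by auto
  then show ?thesis using i(3) by auto
qed

lemma op_job_eq_iff: "op_job q = x \<longleftrightarrow> q = Test x \<or> q = Proc x"
  by (cases q) auto

lemma dd_eq_ops_before_completion:
  assumes "one_sort_order J t p ops"
  shows "dd t p ops x y =
    (if Test x \<in> ops_before_completion ops y then t x else 0) +
    (if Proc x \<in> ops_before_completion ops y then p x else 0)"
proof -
  let ?B = "ops_before_completion ops y"
  have "distinct (filter (\<lambda>q. op_job q = x) (takeWhile (\<lambda>q. q \<noteq> Proc y) ops))"
    using one_sort_order_distinct[OF assms]
    by (metis distinct_filter takeWhile_eq_take distinct_take)
  then have "dd t p ops x y = sum (op_len t p) {q \<in> ?B. op_job q = x}"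
    unfolding dd_def ops_before_completion_def
    by (simp add: sum_list_distinct_conv_sum_set set_filter)
  also have "{q \<in> ?B. op_job q = x} = {Test x, Proc x} \<inter> ?B"
    by (auto simp: op_job_eq_iff)
  also have "sum (op_len t p) \<dots> =
    (if Test x \<in> ?B then t x else 0) + (if Proc x \<in> ?B then p x else 0)"
    by (simp add: Int_insert_left)
  finally show ?thesis .
qed

lemma dd_le_sigma:
  assumes "one_sort_order J t p ops" "0 \<le> t x" "0 \<le> p x"
  shows "dd t p ops x y \<le> t x + p x"
  using assms by (simp add: dd_eq_ops_before_completion)

lemma dd_le_min_if_max_less:
  assumes "one_sort_order J t p ops" "k \<in> J" "0 \<le> t j" "0 \<le> p j"
    and "max (t k) (p k) < max (t j) (p j)"
  shows "dd t p ops j k \<le> min (t j) (p j)"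
proof -
  let ?B = "ops_before_completion ops k"
  have short: "op_len t p y < max (t j) (p j)" if "y \<in> ?B" for y
    using one_sort_order_op_len_before_completion[OF assms(1,2) that] assms(5) by linarith
  have "Proc j \<notin> ?B"
  proof
    assume "Proc j \<in> ?B"
    with short[OF this] short[OF one_sort_order_test_before_proc[OF assms(1) this]]
    show False by simp
  qed
  moreover have "t j \<le> p j" if "Test j \<in> ?B"
    using short[OF that] by simp
  ultimately show ?thesis
    using assms(3,4) by (simp add: dd_eq_ops_before_completion[OF assms(1)])
qed

lemma dd_le_test_if_proc_long:
  assumes "one_sort_order J t p ops" "j \<in> J" "0 \<le> t k"
    and "max (t j) (p j) < p k"
  shows "dd t p ops k j \<le> t k"
proof -
  have "Proc k \<notin> ops_before_completion ops j"
    using one_sort_order_op_len_before_completion[OF assms(1,2)] assms(4) by force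
  then show ?thesis
    using assms(3) by (simp add: dd_eq_ops_before_completion[OF assms(1)])
qed

lemma DD_le_if_test_less_max:
  assumes "one_sort_order J t p ops" "j \<in> J" "k \<in> J"
    and "0 \<le> t j" "0 \<le> p j" "0 \<le> t k" "0 \<le> p k"
    and "t k < max (t j) (p j)" "p k \<noteq> max (t j) (p j)"
  shows "DD t p ops j k \<le>
    (if p k < max (t j) (p j) then t k + p k + min (t j) (p j) else t j + p j + t k)"
proof (cases "p k < max (t j) (p j)")
  case True
  then have "dd t p ops j k \<le> min (t j) (p j)"
    using assms(8) by (intro dd_le_min_if_max_less[OF assms(1,3,4,5)]) simp
  moreover have "dd t p ops k j \<le> t k + p k"
    using dd_le_sigma[OF assms(1,6,7)] .
  ultimately show ?thesis
    using True by (simp add: DD_def min_def)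
next
  case False
  then have "dd t p ops k j \<le> t k"
    using assms(9) by (intro dd_le_test_if_proc_long[OF assms(1,2,6)]) linarith
  moreover have "dd t p ops j k \<le> t j + p j"
    using dd_le_sigma[OF assms(1,4,5)] .
  ultimately show ?thesis
    using False by (simp add: DD_def)
qed

lemma general_position_red_pair:
  assumes "general_position J t p" "j \<in> J" "k \<in> J" "red_pair \<mu> \<nu> t p j k"
    and "0 \<le> t j" "0 \<le> p j"
  shows "t k < max (t j) (p j)" "p k \<noteq> max (t j) (p j)" "0 < min (t j) (p j)"
proof -
  have "j \<noteq> k" "t k \<le> max (t j) (p j)"
    using assms(4) unfolding red_pair_def by auto
  moreover have "t j \<noteq> t k" "t k \<noteq> p j" "p j \<noteq> p k" "t j \<noteq> p k"
    "t j \<noteq> t j + p j" "p j \<noteq> t j + p j"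
    using assms(1-3) \<open>j \<noteq> k\<close> unfolding general_position_def by metis+
  ultimately show "t k < max (t j) (p j)" "p k \<noteq> max (t j) (p j)" "0 < min (t j) (p j)"
    using assms(5,6) by (auto simp: max_def)
qed

text \<open>The right-hand side equals 1 + (1 + c) / (x + 1 + c).\<close>
lemma ratio_le_of_excess:
  fixes S Ds D e x c :: real
  assumes "0 < S + Ds" "0 < x + 1 + c" "D \<le> Ds + e"
    and "e * (x + 1 + c) \<le> (1 + c) * (S + Ds)"
  shows "(S + D) / (S + Ds) \<le> (x + 2 + 2 * c) / (x + 1 + c)"
proof -
  have "(S + D) * (x + 1 + c) \<le> (S + Ds + e) * (x + 1 + c)"
    using assms(2,3) by (intro mult_right_mono) auto
  also have "\<dots> = (S + Ds) * (x + 1 + c) + e * (x + 1 + c)"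
    by (simp add: algebra_simps)
  also have "\<dots> \<le> (x + 2 + 2 * c) * (S + Ds)"
    using assms(4) by (simp add: algebra_simps)
  finally show ?thesis
    using assms(1,2) by (simp add: divide_simps)
qed

lemma red_pair_ratio_bound:
  fixes \<mu> \<nu> m a tk pk D :: real
  assumes "\<mu> > 1" "0 < \<nu>" "\<nu> < 1" "\<mu> * \<nu> > 1" "1 + 1 / \<mu> \<le> \<nu> + \<nu>^2"
    and "0 < a" "\<mu> * a \<le> m" "\<nu> * m \<le> tk" "tk < m" "\<nu> * tk \<le> pk" "pk \<noteq> m"
    and "D \<le> (if pk < m then tk + pk + a else m + a + tk)"
  shows "(tk + pk + D) / (tk + pk + min (m + a) (tk + pk))
           \<le> (\<nu> + \<nu>^2 + 2 + 2 / \<mu>) / (\<nu> + \<nu>^2 + 1 + 1 / \<mu>)"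
proof -
  define c where "c = 1 / \<mu>"
  define x where "x = \<nu> + \<nu>^2"
  define S where "S = tk + pk"
  define Ds where "Ds = min (m + a) S"
  have c: "0 < c" "1 + c \<le> x" "a \<le> c * m" "c < \<nu>"
    using assms(1,4,5,7) by (auto simp: c_def x_def field_simps)
  have "\<nu> * \<nu> < 1"
    using assms(2,3) mult_strict_mono[of \<nu> 1 \<nu> 1] by simp
  then have "x < 2"
    using assms(3) by (simp add: x_def power2_eq_square)
  have "0 < \<mu> * a"
    using assms(1,6) by simp
  then have "0 < m"
    using assms(7) by linarith
  have "c * m < \<nu> * m"
    using c(4) \<open>0 < m\<close> by simp
  then have "c * m < tk"
    using assms(8) by linarith
  have "\<nu> * (\<nu> * m) \<le> \<nu> * tk"
    using assms(2,8) by simp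
  then have "x * m \<le> S"
    using assms(8,10) by (simp add: x_def S_def power2_eq_square algebra_simps)
  have "0 < x * m"
    using c(1,2) \<open>0 < m\<close> by simp
  then have "0 < S"
    using \<open>x * m \<le> S\<close> by linarith
  then have "0 < S + Ds" "0 < x + 1 + c"
    using \<open>0 < m\<close> c assms(6) by (auto simp: Ds_def)
  have "0 \<le> c * m" "0 \<le> c * a"
    using c(1) \<open>0 < m\<close> assms(6) by simp_all
  consider (short_fits) "pk < m" "S \<le> m + a" | (short_exceeds) "pk < m" "m + a < S"
    | (long) "m < pk"
    using assms(11) by linarith
  then have "(S + D) / (S + Ds) \<le> (x + 2 + 2 * c) / (x + 1 + c)"
  proof cases
    case short_fits
    have "a * (x + 1 + c) \<le> c * m * (2 * x)"
      using c \<open>0 < m\<close> assms(6) by (intro mult_mono) auto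
    also have "\<dots> = 2 * c * (x * m)"
      by simp
    also have "\<dots> \<le> 2 * c * S"
      using \<open>x * m \<le> S\<close> c by (intro mult_left_mono) auto
    also have "\<dots> \<le> (1 + c) * (S + S)"
      using \<open>x * m \<le> S\<close> \<open>0 < x * m\<close> by (simp add: algebra_simps)
    finally show ?thesis
      using short_fits assms(12) \<open>0 < S + Ds\<close> \<open>0 < x + 1 + c\<close>
      by (intro ratio_le_of_excess[where e = a]) (auto simp: S_def Ds_def)
  next
    case short_exceeds
    have "(S - m) * x \<le> (S - m) * 2"
      using short_exceeds \<open>x < 2\<close> assms(6) by (intro mult_left_mono) auto
    then have "(S - m) * (x + 1 + c) \<le> (1 + c) * (S + (m + a))"
      using short_exceeds assms(6,9) \<open>0 \<le> c * m\<close> \<open>0 \<le> c * a\<close>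
      by (simp add: S_def algebra_simps)
    then show ?thesis
      using short_exceeds assms(12) \<open>0 < S + Ds\<close> \<open>0 < x + 1 + c\<close>
      by (intro ratio_le_of_excess[where e = "S - m"]) (auto simp: S_def Ds_def)
  next
    case long
    have "tk * x \<le> tk * 2"
      using \<open>x < 2\<close> \<open>c * m < tk\<close> \<open>0 \<le> c * m\<close> by (intro mult_left_mono) auto
    moreover have "0 \<le> c * pk"
      using c(1) long \<open>0 < m\<close> by simp
    ultimately have "tk * (x + 1 + c) \<le> (1 + c) * (S + (m + a))"
      using long assms(6,9) \<open>0 \<le> c * m\<close> \<open>0 \<le> c * a\<close>
      by (simp add: S_def algebra_simps)
    then show ?thesis
      using long assms(12) \<open>0 < S + Ds\<close> \<open>0 < x + 1 + c\<close> \<open>c * m < tk\<close> c(3)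
      by (intro ratio_le_of_excess[where e = tk]) (auto simp: S_def Ds_def)
  qed
  then show ?thesis
    by (simp add: S_def Ds_def x_def c_def)
qed

theorem mainTheorem11:
  fixes J :: "'a set" and t p :: "'a \<Rightarrow> real" and \<mu> \<nu> :: real
    and ops :: "'a operation list" and j k :: 'a
  assumes "finite J"
    and "\<forall>i\<in>J. t i \<ge> 0 \<and> p i \<ge> 0"
    and "general_position J t p"
    and "\<forall>i\<in>J. t i + p i > 0"
    and "\<mu> > 1" and "0 < \<nu>" and "\<nu> < 1" and "\<mu> * \<nu> > 1"
    and "1 + 1 / \<mu> \<le> \<nu> + \<nu>^2"
    and "k \<in> J"
    and "\<exists>!i. i \<in> J \<and> red_pair \<mu> \<nu> t p i k"
    and "j \<in> J" and "red_pair \<mu> \<nu> t p j k"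
    and "one_sort_order J t p ops"
  shows "(t k + p k + DD t p ops j k) / (t k + p k + DDstar t p j k)
           \<le> (\<nu> + \<nu>^2 + 2 + 2 / \<mu>) / (\<nu> + \<nu>^2 + 1 + 1 / \<mu>)"
proof -
  define m where "m = max (t j) (p j)"
  define a where "a = min (t j) (p j)"
  have nonneg: "0 \<le> t j" "0 \<le> p j" "0 \<le> t k" "0 \<le> p k"
    using assms(2,10,12) by auto
  note strict = general_position_red_pair[OF assms(3,12,10,13) nonneg(1,2)]
  have red: "\<mu> * a \<le> m" "\<nu> * m \<le> t k" "\<nu> * t k \<le> p k"
    using assms(13) unfolding red_pair_def imbalanced_def m_def a_def by auto
  have sigma: "t j + p j = m + a"
    by (simp add: m_def a_def)
  have "DD t p ops j k \<le> (if p k < m then t k + p k + a else m + a + t k)"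
    using DD_le_if_test_less_max[OF assms(14,12,10) nonneg strict(1,2),
        folded m_def a_def, unfolded sigma] .
  moreover have "DDstar t p j k = min (m + a) (t k + p k)"
    unfolding DDstar_def sigma ..
  ultimately show ?thesis
    using red_pair_ratio_bound[OF assms(5-9) _ red(1,2) _ red(3)] strict[folded m_def a_def]
    by simp
qed

end
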